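(* Let $\mathcal{M}$ be a small $n$-abelian category, let $M\in(\mathcal{M},\mathcal{G})$ be a mono functor and let $M\hookrightarrow E$ be an essential extension of $M$ in $(\mathcal{M},\mathcal{G})$. Then $E$ is a mono functor.
   Context: $\mathcal{G}$ is the category of abelian groups and $(\mathcal{M},\mathcal{G})$ the abelian category of additive covariant functors $\mathcal{M}\to\mathcal{G}$. A functor $F\in(\mathcal{M},\mathcal{G})$ is a mono functor if $F(f)$ is injective for every monomorphism $f$ of $\mathcal{M}$. A monomorphism $A\to B$ is an essential extension if for every nonzero monomorphism $B'\to B$ the images of $A\to B$ and $B'\to B$ have nonzero intersection. An $n$-abelian category is an idempotent complete additive category in which every morphism has an $n$-kernel and an $n$-cokernel, and in which every monomorphism (resp. epimorphism) together with any of its $n$-cokernels (resp. $n$-kernels) forms an $n$-exact sequence. *)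

theory Defs
  imports "HOL-Algebra.Group"
begin

record ('o,'m) addcat =
  Ob  :: "'o set"
  Mor :: "'o \<Rightarrow> 'o \<Rightarrow> 'm set"
  Cmp :: "'o \<Rightarrow> 'o \<Rightarrow> 'o \<Rightarrow> 'm \<Rightarrow> 'm \<Rightarrow> 'm"  (* Cmp X Y Z g f = g o f for f : X -> Y, g : Y -> Z *)
  Idm :: "'o \<Rightarrow> 'm"
  Add :: "'o \<Rightarrow> 'o \<Rightarrow> 'm \<Rightarrow> 'm \<Rightarrow> 'm"
  Zer :: "'o \<Rightarrow> 'o \<Rightarrow> 'm"

definition hom_group :: "('o,'m) addcat \<Rightarrow> 'o \<Rightarrow> 'o \<Rightarrow> 'm monoid" where
  "hom_group C X Y = \<lparr>carrier = Mor C X Y, mult = Add C X Y, one = Zer C X Y\<rparr>"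

definition preadditive :: "('o,'m) addcat \<Rightarrow> bool" where
  "preadditive C \<longleftrightarrow>
     (\<forall>X\<in>Ob C. Idm C X \<in> Mor C X X) \<and>
     (\<forall>X\<in>Ob C. \<forall>Y\<in>Ob C. \<forall>Z\<in>Ob C. \<forall>f\<in>Mor C X Y. \<forall>g\<in>Mor C Y Z.
        Cmp C X Y Z g f \<in> Mor C X Z) \<and>
     (\<forall>W\<in>Ob C. \<forall>X\<in>Ob C. \<forall>Y\<in>Ob C. \<forall>Z\<in>Ob C.
        \<forall>f\<in>Mor C W X. \<forall>g\<in>Mor C X Y. \<forall>h\<in>Mor C Y Z.
        Cmp C W Y Z h (Cmp C W X Y g f) = Cmp C W X Z (Cmp C X Y Z h g) f) \<and>
     (\<forall>X\<in>Ob C. \<forall>Y\<in>Ob C. \<forall>f\<in>Mor C X Y.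
        Cmp C X X Y f (Idm C X) = f \<and> Cmp C X Y Y (Idm C Y) f = f) \<and>
     (\<forall>X\<in>Ob C. \<forall>Y\<in>Ob C. comm_group (hom_group C X Y)) \<and>
     (\<forall>X\<in>Ob C. \<forall>Y\<in>Ob C. \<forall>Z\<in>Ob C.
        \<forall>f\<in>Mor C X Y. \<forall>f'\<in>Mor C X Y. \<forall>g\<in>Mor C Y Z. \<forall>g'\<in>Mor C Y Z.
        Cmp C X Y Z (Add C Y Z g g') f = Add C X Z (Cmp C X Y Z g f) (Cmp C X Y Z g' f) \<and>
        Cmp C X Y Z g (Add C X Y f f') = Add C X Z (Cmp C X Y Z g f) (Cmp C X Y Z g f'))"

definition zero_object :: "('o,'m) addcat \<Rightarrow> 'o \<Rightarrow> bool" where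
  "zero_object C Z \<longleftrightarrow> Z \<in> Ob C \<and>
     (\<forall>X\<in>Ob C. Mor C Z X = {Zer C Z X} \<and> Mor C X Z = {Zer C X Z})"

definition biproduct :: "('o,'m) addcat \<Rightarrow> 'o \<Rightarrow> 'o \<Rightarrow> 'o \<Rightarrow> 'm \<Rightarrow> 'm \<Rightarrow> 'm \<Rightarrow> 'm \<Rightarrow> bool" where
  "biproduct C A B P i1 i2 p1 p2 \<longleftrightarrow> P \<in> Ob C \<and>
     i1 \<in> Mor C A P \<and> i2 \<in> Mor C B P \<and> p1 \<in> Mor C P A \<and> p2 \<in> Mor C P B \<and>
     Cmp C A P A p1 i1 = Idm C A \<and> Cmp C B P B p2 i2 = Idm C B \<and>
     Cmp C A P B p2 i1 = Zer C A B \<and> Cmp C B P A p1 i2 = Zer C B A \<and>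
     Add C P P (Cmp C P A P i1 p1) (Cmp C P B P i2 p2) = Idm C P"

definition additive :: "('o,'m) addcat \<Rightarrow> bool" where
  "additive C \<longleftrightarrow> preadditive C \<and> (\<exists>Z. zero_object C Z) \<and>
     (\<forall>A\<in>Ob C. \<forall>B\<in>Ob C. \<exists>P i1 i2 p1 p2. biproduct C A B P i1 i2 p1 p2)"

definition idempotent_complete :: "('o,'m) addcat \<Rightarrow> bool" where
  "idempotent_complete C \<longleftrightarrow>
     (\<forall>X\<in>Ob C. \<forall>e\<in>Mor C X X. Cmp C X X X e e = e \<longrightarrow>
        (\<exists>Y\<in>Ob C. \<exists>r\<in>Mor C X Y. \<exists>s\<in>Mor C Y X.
           Cmp C Y X Y r s = Idm C Y \<and> Cmp C X Y X s r = e))"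

definition cat_mono :: "('o,'m) addcat \<Rightarrow> 'o \<Rightarrow> 'o \<Rightarrow> 'm \<Rightarrow> bool" where
  "cat_mono C X Y f \<longleftrightarrow> f \<in> Mor C X Y \<and>
     (\<forall>W\<in>Ob C. \<forall>g\<in>Mor C W X. \<forall>h\<in>Mor C W X. Cmp C W X Y f g = Cmp C W X Y f h \<longrightarrow> g = h)"

definition cat_epi :: "('o,'m) addcat \<Rightarrow> 'o \<Rightarrow> 'o \<Rightarrow> 'm \<Rightarrow> bool" where
  "cat_epi C X Y f \<longleftrightarrow> f \<in> Mor C X Y \<and>
     (\<forall>W\<in>Ob C. \<forall>g\<in>Mor C Y W. \<forall>h\<in>Mor C Y W. Cmp C X Y W g f = Cmp C X Y W h f \<longrightarrow> g = h)"

definition nseq :: "('o,'m) addcat \<Rightarrow> nat \<Rightarrow> (nat \<Rightarrow> 'o) \<Rightarrow> (nat \<Rightarrow> 'm) \<Rightarrow> bool" where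
  "nseq C n X d \<longleftrightarrow> (\<forall>i\<le>Suc n. X i \<in> Ob C) \<and> (\<forall>i\<le>n. d i \<in> Mor C (X i) (X (Suc i)))"

text \<open>(d 0, ..., d (n-1)) is an n-kernel of d n: for every Y the sequence
  0 -> C(Y,X 0) -> C(Y,X 1) -> ... -> C(Y,X n) -> C(Y,X (n+1)) is exact.\<close>
definition is_nkernel :: "('o,'m) addcat \<Rightarrow> nat \<Rightarrow> (nat \<Rightarrow> 'o) \<Rightarrow> (nat \<Rightarrow> 'm) \<Rightarrow> bool" where
  "is_nkernel C n X d \<longleftrightarrow> nseq C n X d \<and>
     (\<forall>i<n. Cmp C (X i) (X (Suc i)) (X (Suc (Suc i))) (d (Suc i)) (d i) = Zer C (X i) (X (Suc (Suc i)))) \<and>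
     (\<forall>Y\<in>Ob C.
        (\<forall>g\<in>Mor C Y (X 0). Cmp C Y (X 0) (X 1) (d 0) g = Zer C Y (X 1) \<longrightarrow> g = Zer C Y (X 0)) \<and>
        (\<forall>i. 1 \<le> i \<and> i \<le> n \<longrightarrow>
           (\<forall>g\<in>Mor C Y (X i). Cmp C Y (X i) (X (Suc i)) (d i) g = Zer C Y (X (Suc i)) \<longrightarrow>
              (\<exists>h\<in>Mor C Y (X (i - 1)). Cmp C Y (X (i - 1)) (X i) (d (i - 1)) h = g))))"

text \<open>(d 1, ..., d n) is an n-cokernel of d 0: for every Y the sequence
  0 -> C(X (n+1),Y) -> C(X n,Y) -> ... -> C(X 1,Y) -> C(X 0,Y) is exact.\<close>
definition is_ncokernel :: "('o,'m) addcat \<Rightarrow> nat \<Rightarrow> (nat \<Rightarrow> 'o) \<Rightarrow> (nat \<Rightarrow> 'm) \<Rightarrow> bool" where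
  "is_ncokernel C n X d \<longleftrightarrow> nseq C n X d \<and>
     (\<forall>i<n. Cmp C (X i) (X (Suc i)) (X (Suc (Suc i))) (d (Suc i)) (d i) = Zer C (X i) (X (Suc (Suc i)))) \<and>
     (\<forall>Y\<in>Ob C.
        (\<forall>g\<in>Mor C (X (Suc n)) Y. Cmp C (X n) (X (Suc n)) Y g (d n) = Zer C (X n) Y \<longrightarrow> g = Zer C (X (Suc n)) Y) \<and>
        (\<forall>i. 1 \<le> i \<and> i \<le> n \<longrightarrow>
           (\<forall>g\<in>Mor C (X i) Y. Cmp C (X (i - 1)) (X i) Y g (d (i - 1)) = Zer C (X (i - 1)) Y \<longrightarrow>
              (\<exists>h\<in>Mor C (X (Suc i)) Y. Cmp C (X i) (X (Suc i)) Y h (d i) = g))))"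

definition n_exact :: "('o,'m) addcat \<Rightarrow> nat \<Rightarrow> (nat \<Rightarrow> 'o) \<Rightarrow> (nat \<Rightarrow> 'm) \<Rightarrow> bool" where
  "n_exact C n X d \<longleftrightarrow> is_nkernel C n X d \<and> is_ncokernel C n X d"

definition n_abelian :: "('o,'m) addcat \<Rightarrow> nat \<Rightarrow> bool" where
  "n_abelian C n \<longleftrightarrow> additive C \<and> idempotent_complete C \<and>
     (\<forall>A\<in>Ob C. \<forall>B\<in>Ob C. \<forall>f\<in>Mor C A B.
        (\<exists>X d. X n = A \<and> X (Suc n) = B \<and> d n = f \<and> is_nkernel C n X d) \<and>
        (\<exists>X d. X 0 = A \<and> X 1 = B \<and> d 0 = f \<and> is_ncokernel C n X d)) \<and>
     (\<forall>X d. cat_mono C (X 0) (X 1) (d 0) \<and> is_ncokernel C n X d \<longrightarrow> n_exact C n X d) \<and>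
     (\<forall>X d. cat_epi C (X n) (X (Suc n)) (d n) \<and> is_nkernel C n X d \<longrightarrow> n_exact C n X d)"

text \<open>A functor F : C -> Ab is given by FO X (an abelian group) and
  FM X Y f : FO X -> FO Y for f : X -> Y.\<close>
definition additive_functor :: "('o,'m) addcat \<Rightarrow> ('o \<Rightarrow> 'g monoid) \<Rightarrow> ('o \<Rightarrow> 'o \<Rightarrow> 'm \<Rightarrow> 'g \<Rightarrow> 'g) \<Rightarrow> bool" where
  "additive_functor C FO FM \<longleftrightarrow>
     (\<forall>X\<in>Ob C. comm_group (FO X)) \<and>
     (\<forall>X\<in>Ob C. \<forall>Y\<in>Ob C. \<forall>f\<in>Mor C X Y. FM X Y f \<in> hom (FO X) (FO Y)) \<and>
     (\<forall>X\<in>Ob C. \<forall>x\<in>carrier (FO X). FM X X (Idm C X) x = x) \<and>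
     (\<forall>X\<in>Ob C. \<forall>Y\<in>Ob C. \<forall>Z\<in>Ob C. \<forall>f\<in>Mor C X Y. \<forall>g\<in>Mor C Y Z. \<forall>x\<in>carrier (FO X).
        FM X Z (Cmp C X Y Z g f) x = FM Y Z g (FM X Y f x)) \<and>
     (\<forall>X\<in>Ob C. \<forall>Y\<in>Ob C. \<forall>f\<in>Mor C X Y. \<forall>g\<in>Mor C X Y. \<forall>x\<in>carrier (FO X).
        FM X Y (Add C X Y f g) x = FM X Y f x \<otimes>\<^bsub>FO Y\<^esub> FM X Y g x)"

definition nat_trans :: "('o,'m) addcat \<Rightarrow> ('o \<Rightarrow> 'a monoid) \<Rightarrow> ('o \<Rightarrow> 'o \<Rightarrow> 'm \<Rightarrow> 'a \<Rightarrow> 'a)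
     \<Rightarrow> ('o \<Rightarrow> 'b monoid) \<Rightarrow> ('o \<Rightarrow> 'o \<Rightarrow> 'm \<Rightarrow> 'b \<Rightarrow> 'b) \<Rightarrow> ('o \<Rightarrow> 'a \<Rightarrow> 'b) \<Rightarrow> bool" where
  "nat_trans C FO FM GO GM \<eta> \<longleftrightarrow>
     (\<forall>X\<in>Ob C. \<eta> X \<in> hom (FO X) (GO X)) \<and>
     (\<forall>X\<in>Ob C. \<forall>Y\<in>Ob C. \<forall>f\<in>Mor C X Y. \<forall>x\<in>carrier (FO X).
        \<eta> Y (FM X Y f x) = GM X Y f (\<eta> X x))"

text \<open>Monomorphisms in the functor category (M,G): componentwise injective natural transformations.\<close>
definition nat_mono :: "('o,'m) addcat \<Rightarrow> ('o \<Rightarrow> 'a monoid) \<Rightarrow> ('o \<Rightarrow> 'o \<Rightarrow> 'm \<Rightarrow> 'a \<Rightarrow> 'a)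
     \<Rightarrow> ('o \<Rightarrow> 'b monoid) \<Rightarrow> ('o \<Rightarrow> 'o \<Rightarrow> 'm \<Rightarrow> 'b \<Rightarrow> 'b) \<Rightarrow> ('o \<Rightarrow> 'a \<Rightarrow> 'b) \<Rightarrow> bool" where
  "nat_mono C FO FM GO GM \<eta> \<longleftrightarrow> nat_trans C FO FM GO GM \<eta> \<and>
     (\<forall>X\<in>Ob C. inj_on (\<eta> X) (carrier (FO X)))"

definition nonzero_functor :: "('o,'m) addcat \<Rightarrow> ('o \<Rightarrow> 'g monoid) \<Rightarrow> bool" where
  "nonzero_functor C FO \<longleftrightarrow> (\<exists>X\<in>Ob C. carrier (FO X) \<noteq> {\<one>\<^bsub>FO X\<^esub>})"

definition essential_extension :: "('o,'m) addcat \<Rightarrow> ('o \<Rightarrow> 'a monoid) \<Rightarrow> ('o \<Rightarrow> 'o \<Rightarrow> 'm \<Rightarrow> 'a \<Rightarrow> 'a)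
     \<Rightarrow> ('o \<Rightarrow> 'b monoid) \<Rightarrow> ('o \<Rightarrow> 'o \<Rightarrow> 'm \<Rightarrow> 'b \<Rightarrow> 'b) \<Rightarrow> ('o \<Rightarrow> 'a \<Rightarrow> 'b) \<Rightarrow> bool" where
  "essential_extension C MO MM EO EM \<eta> \<longleftrightarrow> nat_mono C MO MM EO EM \<eta> \<and>
     (\<forall>(BO :: 'o \<Rightarrow> 'b monoid) BM \<iota>.
        additive_functor C BO BM \<and> nat_mono C BO BM EO EM \<iota> \<and> nonzero_functor C BO \<longrightarrow>
        (\<exists>X\<in>Ob C. \<exists>y. y \<in> \<eta> X ` carrier (MO X) \<and> y \<in> \<iota> X ` carrier (BO X) \<and> y \<noteq> \<one>\<^bsub>EO X\<^esub>))"

definition mono_functor :: "('o,'m) addcat \<Rightarrow> ('o \<Rightarrow> 'g monoid) \<Rightarrow> ('o \<Rightarrow> 'o \<Rightarrow> 'm \<Rightarrow> 'g \<Rightarrow> 'g) \<Rightarrow> bool" where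
  "mono_functor C FO FM \<longleftrightarrow>
     (\<forall>X\<in>Ob C. \<forall>Y\<in>Ob C. \<forall>f. cat_mono C X Y f \<longrightarrow> inj_on (FM X Y f) (carrier (FO X)))"

end

theory Submission
  imports Defs "HOL-Algebra.Coset"
begin

text \<open>Let f : X -> Y be a monomorphism and x in E X with E f x = 0. If x were nonzero, essentiality,
  applied to the subfunctor of E generated by x, would give k : X -> W and a nonzero m in M W with
  eta m = E k x. In an n-abelian category with n >= 1, k and f complete to a commutative square
  g k = h' f with g a monomorphism: the first map of an n-cokernel of the monomorphism
  (k, f) : X -> W + Y has components g and -h'. Then eta (M g m) = E h' (E f x) = 0, so M g m = 0,
  and m = 0 because M is a mono functor.\<close>

locale preadditive_category =
  fixes C :: "('o,'m) addcat"
  assumes preadditive: "preadditive C"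
begin

abbreviation neg :: "'o \<Rightarrow> 'o \<Rightarrow> 'm \<Rightarrow> 'm" where
  "neg X Y f \<equiv> inv\<^bsub>hom_group C X Y\<^esub> f"

lemma id_closed: "X \<in> Ob C \<Longrightarrow> Idm C X \<in> Mor C X X"
  using preadditive unfolding preadditive_def by auto

lemma comp_closed:
  "\<lbrakk>X \<in> Ob C; Y \<in> Ob C; Z \<in> Ob C; f \<in> Mor C X Y; g \<in> Mor C Y Z\<rbrakk>
   \<Longrightarrow> Cmp C X Y Z g f \<in> Mor C X Z"
  using preadditive unfolding preadditive_def by auto

lemma comp_assoc:
  "\<lbrakk>W \<in> Ob C; X \<in> Ob C; Y \<in> Ob C; Z \<in> Ob C; f \<in> Mor C W X; g \<in> Mor C X Y; h \<in> Mor C Y Z\<rbrakk>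
   \<Longrightarrow> Cmp C W Y Z h (Cmp C W X Y g f) = Cmp C W X Z (Cmp C X Y Z h g) f"
  using preadditive unfolding preadditive_def by auto

lemma comp_id_left: "\<lbrakk>X \<in> Ob C; Y \<in> Ob C; f \<in> Mor C X Y\<rbrakk> \<Longrightarrow> Cmp C X Y Y (Idm C Y) f = f"
  using preadditive unfolding preadditive_def by auto

lemma hom_group_comm_group: "\<lbrakk>X \<in> Ob C; Y \<in> Ob C\<rbrakk> \<Longrightarrow> comm_group (hom_group C X Y)"
  using preadditive unfolding preadditive_def by auto

lemma comp_add_left:
  "\<lbrakk>X \<in> Ob C; Y \<in> Ob C; Z \<in> Ob C; f \<in> Mor C X Y; g \<in> Mor C Y Z; g' \<in> Mor C Y Z\<rbrakk>
   \<Longrightarrow> Cmp C X Y Z (Add C Y Z g g') f = Add C X Z (Cmp C X Y Z g f) (Cmp C X Y Z g' f)"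
  using preadditive unfolding preadditive_def by auto

lemma comp_add_right:
  "\<lbrakk>X \<in> Ob C; Y \<in> Ob C; Z \<in> Ob C; f \<in> Mor C X Y; f' \<in> Mor C X Y; g \<in> Mor C Y Z\<rbrakk>
   \<Longrightarrow> Cmp C X Y Z g (Add C X Y f f') = Add C X Z (Cmp C X Y Z g f) (Cmp C X Y Z g f')"
  using preadditive unfolding preadditive_def by auto

lemma hom_group_group: "\<lbrakk>X \<in> Ob C; Y \<in> Ob C\<rbrakk> \<Longrightarrow> group (hom_group C X Y)"
  using hom_group_comm_group comm_group.axioms(2) by blast

lemma zero_closed: "\<lbrakk>X \<in> Ob C; Y \<in> Ob C\<rbrakk> \<Longrightarrow> Zer C X Y \<in> Mor C X Y"
  using group.is_monoid[OF hom_group_group] monoid.one_closed by (fastforce simp: hom_group_def)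

lemma add_closed:
  "\<lbrakk>X \<in> Ob C; Y \<in> Ob C; f \<in> Mor C X Y; g \<in> Mor C X Y\<rbrakk> \<Longrightarrow> Add C X Y f g \<in> Mor C X Y"
  using group.is_monoid[OF hom_group_group] monoid.m_closed by (fastforce simp: hom_group_def)

lemma neg_closed: "\<lbrakk>X \<in> Ob C; Y \<in> Ob C; f \<in> Mor C X Y\<rbrakk> \<Longrightarrow> neg X Y f \<in> Mor C X Y"
  using group.inv_closed[OF hom_group_group] by (fastforce simp: hom_group_def)

lemma postcomp_group_hom:
  assumes "X \<in> Ob C" "Y \<in> Ob C" "Z \<in> Ob C" "g \<in> Mor C Y Z"
  shows "group_hom (hom_group C X Y) (hom_group C X Z) (Cmp C X Y Z g)"
  using assms hom_group_group
  by (intro group_hom.intro group_hom_axioms.intro)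
     (auto simp: hom_def hom_group_def comp_closed comp_add_right)

lemma precomp_group_hom:
  assumes "X \<in> Ob C" "Y \<in> Ob C" "Z \<in> Ob C" "f \<in> Mor C X Y"
  shows "group_hom (hom_group C Y Z) (hom_group C X Z) (\<lambda>g. Cmp C X Y Z g f)"
  using assms hom_group_group
  by (intro group_hom.intro group_hom_axioms.intro)
     (auto simp: hom_def hom_group_def comp_closed comp_add_left)

lemma comp_zero_left:
  "\<lbrakk>X \<in> Ob C; Y \<in> Ob C; Z \<in> Ob C; f \<in> Mor C X Y\<rbrakk> \<Longrightarrow> Cmp C X Y Z (Zer C Y Z) f = Zer C X Z"
  using group_hom.hom_one[OF precomp_group_hom] by (simp add: hom_group_def)

lemma comp_zero_right:
  "\<lbrakk>X \<in> Ob C; Y \<in> Ob C; Z \<in> Ob C; g \<in> Mor C Y Z\<rbrakk> \<Longrightarrow> Cmp C X Y Z g (Zer C X Y) = Zer C X Z"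
  using group_hom.hom_one[OF postcomp_group_hom] by (simp add: hom_group_def)

lemma comp_neg_left:
  "\<lbrakk>X \<in> Ob C; Y \<in> Ob C; Z \<in> Ob C; f \<in> Mor C X Y; g \<in> Mor C Y Z\<rbrakk>
   \<Longrightarrow> Cmp C X Y Z (neg Y Z g) f = neg X Z (Cmp C X Y Z g f)"
  using group_hom.hom_inv[OF precomp_group_hom] by (simp add: hom_group_def)

lemma cat_monoI_trivial_kernel:
  assumes W: "W \<in> Ob C" and W': "W' \<in> Ob C" and g: "g \<in> Mor C W W'"
    and zero: "\<And>V c. \<lbrakk>V \<in> Ob C; c \<in> Mor C V W; Cmp C V W W' g c = Zer C V W'\<rbrakk>
                \<Longrightarrow> c = Zer C V W"
  shows "cat_mono C W W' g"
proof -
  have "inj_on (Cmp C V W W' g) (Mor C V W)" if V: "V \<in> Ob C" for V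
    using group_hom.inj_on_one_iff[OF postcomp_group_hom[OF V W W' g]] zero[OF V]
    by (simp add: hom_group_def)
  then show ?thesis
    using g unfolding cat_mono_def inj_on_def by blast
qed

lemma cat_mono_of_comp_mono:
  assumes X: "X \<in> Ob C" and Y: "Y \<in> Ob C" and Z: "Z \<in> Ob C"
    and d: "d \<in> Mor C X Y" and p: "p \<in> Mor C Y Z" and pd: "cat_mono C X Z (Cmp C X Y Z p d)"
  shows "cat_mono C X Y d"
  unfolding cat_mono_def
proof (intro conjI d ballI impI)
  fix V a b assume V: "V \<in> Ob C" and a: "a \<in> Mor C V X" and b: "b \<in> Mor C V X"
    and eq: "Cmp C V X Y d a = Cmp C V X Y d b"
  have "Cmp C V X Z (Cmp C X Y Z p d) a = Cmp C V X Z (Cmp C X Y Z p d) b"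
    using eq comp_assoc[OF V X Y Z _ d p] a b by metis
  then show "a = b" using pd V a b unfolding cat_mono_def by blast
qed

lemma biproduct_snd_comp_sum:
  assumes bp: "biproduct C A B P i1 i2 p1 p2"
    and Z: "Z \<in> Ob C" and A: "A \<in> Ob C" and B: "B \<in> Ob C"
    and a: "a \<in> Mor C Z A" and b: "b \<in> Mor C Z B"
  shows "Cmp C Z P B p2 (Add C Z P (Cmp C Z A P i1 a) (Cmp C Z B P i2 b)) = b"
proof -
  have P: "P \<in> Ob C" and i1: "i1 \<in> Mor C A P" and i2: "i2 \<in> Mor C B P" and p2: "p2 \<in> Mor C P B"
    and p2i1: "Cmp C A P B p2 i1 = Zer C A B" and p2i2: "Cmp C B P B p2 i2 = Idm C B"
    using bp unfolding biproduct_def by simp_all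
  have "Cmp C Z P B p2 (Add C Z P (Cmp C Z A P i1 a) (Cmp C Z B P i2 b))
      = Add C Z B (Cmp C Z P B p2 (Cmp C Z A P i1 a)) (Cmp C Z P B p2 (Cmp C Z B P i2 b))"
    using comp_add_right[OF Z P B comp_closed[OF Z A P a i1] comp_closed[OF Z B P b i2] p2] .
  also have "\<dots> = Add C Z B (Cmp C Z A B (Cmp C A P B p2 i1) a) (Cmp C Z B B (Cmp C B P B p2 i2) b)"
    using comp_assoc[OF Z A P B a i1 p2] comp_assoc[OF Z B P B b i2 p2] by simp
  also have "\<dots> = Add C Z B (Zer C Z B) b"
    unfolding p2i1 p2i2 using comp_zero_left comp_id_left Z A B a b by simp
  also have "\<dots> = b"
    using group.is_monoid[OF hom_group_group[OF Z B]] monoid.l_one b by (fastforce simp: hom_group_def)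
  finally show ?thesis .
qed

lemma biproduct_weak_kernel_fst_mono:
  assumes bp: "biproduct C W Y P i1 i2 p1 p2"
    and Z: "Z \<in> Ob C" and W: "W \<in> Ob C" and Y: "Y \<in> Ob C" and W': "W' \<in> Ob C"
    and f: "cat_mono C Z Y f" and h: "h \<in> Mor C Z W" and d': "d' \<in> Mor C P W'"
    and ker: "\<And>V g. \<lbrakk>V \<in> Ob C; g \<in> Mor C V P; Cmp C V P W' d' g = Zer C V W'\<rbrakk>
                \<Longrightarrow> \<exists>e\<in>Mor C V Z.
                      Cmp C V Z P (Add C Z P (Cmp C Z W P i1 h) (Cmp C Z Y P i2 f)) e = g"
  shows "cat_mono C W W' (Cmp C W P W' d' i1)"
proof -
  define d where "d = Add C Z P (Cmp C Z W P i1 h) (Cmp C Z Y P i2 f)"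
  have fM: "f \<in> Mor C Z Y" using f unfolding cat_mono_def by blast
  have P: "P \<in> Ob C" and i1: "i1 \<in> Mor C W P" and i2: "i2 \<in> Mor C Y P"
    and p1: "p1 \<in> Mor C P W" and p2: "p2 \<in> Mor C P Y"
    and p1i1: "Cmp C W P W p1 i1 = Idm C W" and p2i1: "Cmp C W P Y p2 i1 = Zer C W Y"
    using bp unfolding biproduct_def by simp_all
  have dM: "d \<in> Mor C Z P"
    unfolding d_def using add_closed comp_closed Z W Y P h fM i1 i2 by blast
  have p2d: "Cmp C Z P Y p2 d = f"
    unfolding d_def by (rule biproduct_snd_comp_sum[OF bp Z W Y h fM])
  show ?thesis
  proof (rule cat_monoI_trivial_kernel[OF W W' comp_closed[OF W P W' i1 d']])
    fix V c assume V: "V \<in> Ob C" and c: "c \<in> Mor C V W"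
      and d'i1c: "Cmp C V W W' (Cmp C W P W' d' i1) c = Zer C V W'"
    have i1c: "Cmp C V W P i1 c \<in> Mor C V P" using comp_closed[OF V W P c i1] .
    obtain e where e: "e \<in> Mor C V Z" and de: "Cmp C V Z P d e = Cmp C V W P i1 c"
      using ker[OF V i1c] d'i1c comp_assoc[OF V W P W' c i1 d'] unfolding d_def by auto
    have "Cmp C V Z Y f e = Cmp C V W Y (Cmp C W P Y p2 i1) c"
      using p2d de comp_assoc[OF V Z P Y e dM p2] comp_assoc[OF V W P Y c i1 p2] by simp
    also have "\<dots> = Cmp C V Z Y f (Zer C V Z)"
      unfolding p2i1 using comp_zero_left[OF V W Y c] comp_zero_right[OF V Z Y fM] by simp
    finally have "e = Zer C V Z" using f V e zero_closed[OF V Z] unfolding cat_mono_def by blast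
    then have "Cmp C V W P i1 c = Zer C V P" using de comp_zero_right[OF V Z P dM] by simp
    then have "Cmp C V W W (Cmp C W P W p1 i1) c = Zer C V W"
      using comp_assoc[OF V W P W c i1 p1] comp_zero_right[OF V P W p1] by simp
    then show "c = Zer C V W" unfolding p1i1 using comp_id_left[OF V W c] by simp
  qed
qed

end

lemma additive_functor_comm_group:
  "\<lbrakk>additive_functor C FO FM; X \<in> Ob C\<rbrakk> \<Longrightarrow> comm_group (FO X)"
  unfolding additive_functor_def by blast

lemma additive_functor_group_hom:
  assumes "additive_functor C FO FM" "X \<in> Ob C" "Y \<in> Ob C" "f \<in> Mor C X Y"
  shows "group_hom (FO X) (FO Y) (FM X Y f)"
  using assms additive_functor_comm_group[OF assms(1)] comm_group.axioms(2)
  unfolding group_hom_def group_hom_axioms_def additive_functor_def by blast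

lemma additive_functor_id:
  "\<lbrakk>additive_functor C FO FM; X \<in> Ob C; x \<in> carrier (FO X)\<rbrakk> \<Longrightarrow> FM X X (Idm C X) x = x"
  unfolding additive_functor_def by blast

lemma additive_functor_comp:
  "\<lbrakk>additive_functor C FO FM; X \<in> Ob C; Y \<in> Ob C; Z \<in> Ob C; f \<in> Mor C X Y; g \<in> Mor C Y Z;
    x \<in> carrier (FO X)\<rbrakk> \<Longrightarrow> FM X Z (Cmp C X Y Z g f) x = FM Y Z g (FM X Y f x)"
  unfolding additive_functor_def by blast

lemma additive_functor_add:
  "\<lbrakk>additive_functor C FO FM; X \<in> Ob C; Y \<in> Ob C; f \<in> Mor C X Y; g \<in> Mor C X Y;
    x \<in> carrier (FO X)\<rbrakk> \<Longrightarrow> FM X Y (Add C X Y f g) x = FM X Y f x \<otimes>\<^bsub>FO Y\<^esub> FM X Y g x"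
  unfolding additive_functor_def by blast

text \<open>The subfunctor of F generated by x in F X: the image of the natural transformation
  C(X,-) -> F that the Yoneda lemma associates with x.\<close>
definition generated_subfunctor ::
    "('o,'m) addcat \<Rightarrow> ('o \<Rightarrow> 'g monoid) \<Rightarrow> ('o \<Rightarrow> 'o \<Rightarrow> 'm \<Rightarrow> 'g \<Rightarrow> 'g) \<Rightarrow>
     'o \<Rightarrow> 'g \<Rightarrow> 'o \<Rightarrow> 'g monoid"
  where "generated_subfunctor C FO FM X x W = (FO W)\<lparr>carrier := (\<lambda>k. FM X W k x) ` Mor C X W\<rparr>"

lemma generated_subfunctor_subset:
  "\<lbrakk>additive_functor C FO FM; X \<in> Ob C; W \<in> Ob C; x \<in> carrier (FO X)\<rbrakk>
   \<Longrightarrow> carrier (generated_subfunctor C FO FM X x W) \<subseteq> carrier (FO W)"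
  using group_hom.hom_closed[OF additive_functor_group_hom] unfolding generated_subfunctor_def by auto

lemma generated_subfunctor_nat_mono:
  assumes "additive_functor C FO FM" "X \<in> Ob C" "x \<in> carrier (FO X)"
  shows "nat_mono C (generated_subfunctor C FO FM X x) FM FO FM (\<lambda>W y. y)"
  using generated_subfunctor_subset[OF assms(1,2) _ assms(3)]
  unfolding nat_mono_def nat_trans_def by (auto simp: hom_def generated_subfunctor_def)

context preadditive_category
begin

lemma additive_functor_eval_group_hom:
  assumes F: "additive_functor C FO FM" and X: "X \<in> Ob C" and Y: "Y \<in> Ob C"
    and x: "x \<in> carrier (FO X)"
  shows "group_hom (hom_group C X Y) (FO Y) (\<lambda>k. FM X Y k x)"
  using hom_group_group[OF X Y] comm_group.axioms(2)[OF additive_functor_comm_group[OF F Y]]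
    group_hom.hom_closed[OF additive_functor_group_hom[OF F X Y]] additive_functor_add[OF F X Y] x
  by (intro group_hom.intro group_hom_axioms.intro) (auto simp: hom_def hom_group_def)

lemma generated_subfunctor_comm_group:
  assumes F: "additive_functor C FO FM" and X: "X \<in> Ob C" and W: "W \<in> Ob C"
    and x: "x \<in> carrier (FO X)"
  shows "comm_group (generated_subfunctor C FO FM X x W)"
proof -
  interpret ev: group_hom "hom_group C X W" "FO W" "\<lambda>k. FM X W k x"
    using additive_functor_eval_group_hom[OF F X W x] .
  have "FM X W (Zer C X W) x = \<one>\<^bsub>FO W\<^esub>"
    using ev.hom_one by (simp add: hom_group_def)
  then show ?thesis
    using comm_group.hom_imp_img_comm_group[OF hom_group_comm_group[OF X W] ev.homh]
    by (simp add: generated_subfunctor_def hom_group_def)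
qed

lemma generated_subfunctor_additive:
  assumes F: "additive_functor C FO FM" and X: "X \<in> Ob C" and x: "x \<in> carrier (FO X)"
  shows "additive_functor C (generated_subfunctor C FO FM X x) FM"
proof -
  let ?B = "generated_subfunctor C FO FM X x"
  have sub: "\<And>W y. \<lbrakk>W \<in> Ob C; y \<in> carrier (?B W)\<rbrakk> \<Longrightarrow> y \<in> carrier (FO W)"
    using generated_subfunctor_subset[OF F X _ x] by blast
  have closed: "FM W W' k y \<in> carrier (?B W')"
    if W: "W \<in> Ob C" and W': "W' \<in> Ob C" and k: "k \<in> Mor C W W'" and y: "y \<in> carrier (?B W)"
    for W W' k y
  proof -
    obtain l where l: "l \<in> Mor C X W" and yl: "y = FM X W l x"
      using y unfolding generated_subfunctor_def by auto
    have "FM W W' k y = FM X W' (Cmp C X W W' k l) x"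
      using additive_functor_comp[OF F X W W' l k x] yl by simp
    then show ?thesis
      using comp_closed[OF X W W' l k] unfolding generated_subfunctor_def by simp
  qed
  show ?thesis
    unfolding additive_functor_def
  proof (intro conjI ballI)
    fix W assume "W \<in> Ob C"
    then show "comm_group (?B W)" using generated_subfunctor_comm_group[OF F X _ x] by blast
  next
    fix W W' k assume W: "W \<in> Ob C" and W': "W' \<in> Ob C" and k: "k \<in> Mor C W W'"
    show "FM W W' k \<in> hom (?B W) (?B W')"
      using closed[OF W W' k] sub[OF W] group_hom.hom_mult[OF additive_functor_group_hom[OF F W W' k]]
      by (auto simp: hom_def generated_subfunctor_def)
  next
    fix W y assume "W \<in> Ob C" "y \<in> carrier (?B W)"
    then show "FM W W (Idm C W) y = y" using additive_functor_id[OF F] sub by blast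
  next
    fix W W' W'' k l y
    assume "W \<in> Ob C" "W' \<in> Ob C" "W'' \<in> Ob C" "k \<in> Mor C W W'" "l \<in> Mor C W' W''"
      "y \<in> carrier (?B W)"
    then show "FM W W'' (Cmp C W W' W'' l k) y = FM W' W'' l (FM W W' k y)"
      using additive_functor_comp[OF F] sub by blast
  next
    fix W W' k l y assume "W \<in> Ob C" "W' \<in> Ob C" "k \<in> Mor C W W'" "l \<in> Mor C W W'"
      "y \<in> carrier (?B W)"
    then show "FM W W' (Add C W W' k l) y = FM W W' k y \<otimes>\<^bsub>?B W'\<^esub> FM W W' l y"
      using additive_functor_add[OF F] sub by (simp add: generated_subfunctor_def)
  qed
qed

lemma generated_subfunctor_nonzero:
  assumes F: "additive_functor C FO FM" and X: "X \<in> Ob C" and x: "x \<in> carrier (FO X)"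
    and x1: "x \<noteq> \<one>\<^bsub>FO X\<^esub>"
  shows "nonzero_functor C (generated_subfunctor C FO FM X x)"
proof -
  have "x \<in> carrier (generated_subfunctor C FO FM X x X)"
    using additive_functor_id[OF F X x] id_closed[OF X]
    unfolding generated_subfunctor_def by (auto intro: image_eqI[where x = "Idm C X"])
  then show ?thesis
    using X x1 unfolding nonzero_functor_def by (auto simp: generated_subfunctor_def)
qed

lemma essential_extension_meets_generated:
  assumes E: "additive_functor C EO EM" and ess: "essential_extension C MO MM EO EM \<eta>"
    and X: "X \<in> Ob C" and x: "x \<in> carrier (EO X)" and x1: "x \<noteq> \<one>\<^bsub>EO X\<^esub>"
  shows "\<exists>W\<in>Ob C. \<exists>k\<in>Mor C X W. \<exists>m\<in>carrier (MO W).
           \<eta> W m = EM X W k x \<and> EM X W k x \<noteq> \<one>\<^bsub>EO W\<^esub>"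
proof -
  have "\<exists>W\<in>Ob C. \<exists>y. y \<in> \<eta> W ` carrier (MO W) \<and>
          y \<in> carrier (generated_subfunctor C EO EM X x W) \<and> y \<noteq> \<one>\<^bsub>EO W\<^esub>"
    using ess generated_subfunctor_additive[OF E X x] generated_subfunctor_nat_mono[OF E X x]
      generated_subfunctor_nonzero[OF E X x x1]
    unfolding essential_extension_def by (metis image_ident)
  then show ?thesis unfolding generated_subfunctor_def by fastforce
qed

end

locale n_abelian_category =
  fixes C :: "('o,'m) addcat" and n :: nat
  assumes n_abelian: "n_abelian C n" and n_pos: "1 \<le> n"

sublocale n_abelian_category \<subseteq> preadditive_category
  using n_abelian unfolding n_abelian_def additive_def by unfold_locales blast

context n_abelian_category
begin

lemma biproduct_exists:
  "\<lbrakk>A \<in> Ob C; B \<in> Ob C\<rbrakk> \<Longrightarrow> \<exists>P i1 i2 p1 p2. biproduct C A B P i1 i2 p1 p2"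
  using n_abelian unfolding n_abelian_def additive_def by blast

lemma mono_is_kernel:
  assumes Z: "Z \<in> Ob C" and P: "P \<in> Ob C" and d: "cat_mono C Z P d"
  shows "\<exists>W\<in>Ob C. \<exists>d'\<in>Mor C P W. Cmp C Z P W d' d = Zer C Z W \<and>
           (\<forall>V\<in>Ob C. \<forall>g\<in>Mor C V P. Cmp C V P W d' g = Zer C V W \<longrightarrow>
              (\<exists>e\<in>Mor C V Z. Cmp C V Z P d e = g))"
proof -
  have dM: "d \<in> Mor C Z P" using d unfolding cat_mono_def by blast
  obtain X ds where X0: "X 0 = Z" and X1: "X 1 = P" and d0: "ds 0 = d"
    and cok: "is_ncokernel C n X ds"
    using n_abelian Z P dM unfolding n_abelian_def by blast
  have "n_exact C n X ds"
    using n_abelian d cok X0 X1 d0 unfolding n_abelian_def by auto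
  then have ker: "is_nkernel C n X ds" unfolding n_exact_def by blast
  show ?thesis
  proof (intro bexI conjI)
    show "X 2 \<in> Ob C" and "ds 1 \<in> Mor C P (X 2)"
      using ker n_pos X1 unfolding is_nkernel_def nseq_def by (auto simp: numeral_2_eq_2)
    show "Cmp C Z P (X 2) (ds 1) d = Zer C Z (X 2)"
      using ker n_pos X0 X1 d0 unfolding is_nkernel_def by (auto simp: numeral_2_eq_2)
    show "\<forall>V\<in>Ob C. \<forall>g\<in>Mor C V P. Cmp C V P (X 2) (ds 1) g = Zer C V (X 2) \<longrightarrow>
            (\<exists>e\<in>Mor C V Z. Cmp C V Z P d e = g)"
    proof (intro ballI impI)
      fix V g assume V: "V \<in> Ob C" and g: "g \<in> Mor C V P" "Cmp C V P (X 2) (ds 1) g = Zer C V (X 2)"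
      have "\<forall>g\<in>Mor C V (X 1). Cmp C V (X 1) (X (Suc 1)) (ds 1) g = Zer C V (X (Suc 1)) \<longrightarrow>
              (\<exists>e\<in>Mor C V (X (1 - 1)). Cmp C V (X (1 - 1)) (X 1) (ds (1 - 1)) e = g)"
        using ker V n_pos unfolding is_nkernel_def by blast
      then show "\<exists>e\<in>Mor C V Z. Cmp C V Z P d e = g"
        using g X0 X1 d0 by (simp add: numeral_2_eq_2)
    qed
  qed
qed

lemma mono_pushout_square:
  assumes Z: "Z \<in> Ob C" and Y: "Y \<in> Ob C" and W: "W \<in> Ob C"
    and f: "cat_mono C Z Y f" and h: "h \<in> Mor C Z W"
  shows "\<exists>W'\<in>Ob C. \<exists>g h'. cat_mono C W W' g \<and> h' \<in> Mor C Y W' \<and>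
           Cmp C Z W W' g h = Cmp C Z Y W' h' f"
proof -
  have fM: "f \<in> Mor C Z Y" using f unfolding cat_mono_def by blast
  obtain P i1 i2 p1 p2 where bp: "biproduct C W Y P i1 i2 p1 p2"
    using biproduct_exists[OF W Y] by blast
  have P: "P \<in> Ob C" and i1: "i1 \<in> Mor C W P" and i2: "i2 \<in> Mor C Y P"
    and p2: "p2 \<in> Mor C P Y"
    using bp unfolding biproduct_def by simp_all
  define d where "d = Add C Z P (Cmp C Z W P i1 h) (Cmp C Z Y P i2 f)"
  have i1h: "Cmp C Z W P i1 h \<in> Mor C Z P" and i2f: "Cmp C Z Y P i2 f \<in> Mor C Z P"
    using comp_closed Z W Y P h fM i1 i2 by blast+
  have dM: "d \<in> Mor C Z P" unfolding d_def using add_closed[OF Z P i1h i2f] .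
  have p2d: "Cmp C Z P Y p2 d = f"
    unfolding d_def by (rule biproduct_snd_comp_sum[OF bp Z W Y h fM])
  have "cat_mono C Z P d"
    using cat_mono_of_comp_mono[OF Z P Y dM p2] p2d f by simp
  then obtain W' d' where W': "W' \<in> Ob C" and d': "d' \<in> Mor C P W'"
    and d'd: "Cmp C Z P W' d' d = Zer C Z W'"
    and ker: "\<And>V g. \<lbrakk>V \<in> Ob C; g \<in> Mor C V P; Cmp C V P W' d' g = Zer C V W'\<rbrakk>
                \<Longrightarrow> \<exists>e\<in>Mor C V Z. Cmp C V Z P d e = g"
    using mono_is_kernel[OF Z P] by blast
  define g where "g = Cmp C W P W' d' i1"
  define h' where "h' = neg Y W' (Cmp C Y P W' d' i2)"
  have gM: "g \<in> Mor C W W'" unfolding g_def using comp_closed[OF W P W' i1 d'] .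
  have d'i2: "Cmp C Y P W' d' i2 \<in> Mor C Y W'" using comp_closed[OF Y P W' i2 d'] .
  have "Add C Z W' (Cmp C Z W W' g h) (Cmp C Z Y W' (Cmp C Y P W' d' i2) f) = Zer C Z W'"
    using d'd comp_add_right[OF Z P W' i1h i2f d'] comp_assoc[OF Z W P W' h i1 d']
      comp_assoc[OF Z Y P W' fM i2 d'] unfolding d_def g_def by simp
  then have square: "Cmp C Z W W' g h = Cmp C Z Y W' h' f"
    using group.inv_equality[OF hom_group_group[OF Z W']] comp_closed[OF Z W W' h gM]
      comp_closed[OF Z Y W' fM d'i2] comp_neg_left[OF Z Y W' fM d'i2]
    unfolding h'_def by (simp add: hom_group_def)
  have "cat_mono C W W' g"
    using biproduct_weak_kernel_fst_mono[OF bp Z W Y W' f h d'] ker unfolding d_def g_def by blast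
  then show ?thesis using W' d'i2 neg_closed[OF Y W' d'i2] square unfolding h'_def by blast
qed

lemma mono_functor_image_avoids_mono_kernel:
  assumes M: "additive_functor C MO MM" and M_mono: "mono_functor C MO MM"
    and E: "additive_functor C EO EM" and \<eta>: "nat_mono C MO MM EO EM \<eta>"
    and X: "X \<in> Ob C" and Y: "Y \<in> Ob C" and W: "W \<in> Ob C"
    and f: "cat_mono C X Y f" and x: "x \<in> carrier (EO X)" and fx: "EM X Y f x = \<one>\<^bsub>EO Y\<^esub>"
    and k: "k \<in> Mor C X W" and m: "m \<in> carrier (MO W)" and \<eta>m: "\<eta> W m = EM X W k x"
  shows "EM X W k x = \<one>\<^bsub>EO W\<^esub>"
proof -
  obtain W' g h' where W': "W' \<in> Ob C" and g: "cat_mono C W W' g" and h': "h' \<in> Mor C Y W'"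
    and square: "Cmp C X W W' g k = Cmp C X Y W' h' f"
    using mono_pushout_square[OF X Y W f k] by blast
  have fM: "f \<in> Mor C X Y" and gM: "g \<in> Mor C W W'" using f g unfolding cat_mono_def by blast+
  interpret Mg: group_hom "MO W" "MO W'" "MM W W' g"
    using additive_functor_group_hom[OF M W W' gM] .
  have \<eta>_one: "\<eta> V \<one>\<^bsub>MO V\<^esub> = \<one>\<^bsub>EO V\<^esub>" if V: "V \<in> Ob C" for V
  proof (rule hom_one)
    show "\<eta> V \<in> hom (MO V) (EO V)" using \<eta> V unfolding nat_mono_def nat_trans_def by blast
    show "group (MO V)" "group (EO V)"
      using comm_group.axioms(2) additive_functor_comm_group[OF M V] additive_functor_comm_group[OF E V]
      by blast+
  qed
  have "\<eta> W' (MM W W' g m) = EM W W' g (\<eta> W m)"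
    using \<eta> W W' gM m unfolding nat_mono_def nat_trans_def by blast
  also have "\<dots> = EM Y W' h' (EM X Y f x)"
    using \<eta>m square additive_functor_comp[OF E X W W' k gM x] additive_functor_comp[OF E X Y W' fM h' x]
    by simp
  also have "\<dots> = \<eta> W' \<one>\<^bsub>MO W'\<^esub>"
    using fx group_hom.hom_one[OF additive_functor_group_hom[OF E Y W' h']] \<eta>_one[OF W'] by simp
  finally have "MM W W' g m = \<one>\<^bsub>MO W'\<^esub>"
    using inj_onD[OF _ _ Mg.hom_closed[OF m] Mg.H.one_closed] \<eta> W' unfolding nat_mono_def by blast
  then have "m = \<one>\<^bsub>MO W\<^esub>"
    using M_mono W W' g m Mg.inj_on_one_iff unfolding mono_functor_def by blast
  then show ?thesis using \<eta>m \<eta>_one[OF W] by simp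
qed

end

theorem mainTheorem4:
  fixes C :: "('o,'m) addcat" and n :: nat
    and MO :: "'o \<Rightarrow> 'a monoid" and MM :: "'o \<Rightarrow> 'o \<Rightarrow> 'm \<Rightarrow> 'a \<Rightarrow> 'a"
    and EO :: "'o \<Rightarrow> 'b monoid" and EM :: "'o \<Rightarrow> 'o \<Rightarrow> 'm \<Rightarrow> 'b \<Rightarrow> 'b"
    and \<eta> :: "'o \<Rightarrow> 'a \<Rightarrow> 'b"
  assumes "1 \<le> n"
    and "n_abelian C n"
    and "additive_functor C MO MM"
    and "mono_functor C MO MM"
    and "additive_functor C EO EM"
    and "essential_extension C MO MM EO EM \<eta>"
  shows "mono_functor C EO EM"
proof -
  interpret n_abelian_category C n using assms(1,2) by unfold_locales
  have \<eta>: "nat_mono C MO MM EO EM \<eta>" using assms(6) unfolding essential_extension_def by blast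
  show ?thesis unfolding mono_functor_def
  proof (intro ballI allI impI)
    fix X Y f assume X: "X \<in> Ob C" and Y: "Y \<in> Ob C" and f: "cat_mono C X Y f"
    then have fM: "f \<in> Mor C X Y" unfolding cat_mono_def by blast
    show "inj_on (EM X Y f) (carrier (EO X))"
      unfolding group_hom.inj_on_one_iff[OF additive_functor_group_hom[OF assms(5) X Y fM]]
    proof (intro allI impI, rule ccontr)
      fix x assume x: "x \<in> carrier (EO X)" and fx: "EM X Y f x = \<one>\<^bsub>EO Y\<^esub>"
        and "x \<noteq> \<one>\<^bsub>EO X\<^esub>"
      then obtain W k m where "W \<in> Ob C" "k \<in> Mor C X W" "m \<in> carrier (MO W)"
        "\<eta> W m = EM X W k x" "EM X W k x \<noteq> \<one>\<^bsub>EO W\<^esub>"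
        using essential_extension_meets_generated[OF assms(5,6) X] by blast
      then show False
        using mono_functor_image_avoids_mono_kernel[OF assms(3,4,5) \<eta> X Y _ f x fx] by blast
    qed
  qed
qed

end
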